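(* Let $n\ge1$, $k\ge2$, $\mathcal{K}=\{\kappa_0,\dots,\kappa_{k-1}\}$ a set of size $k$, $\epsilon\ge0$ and $p=e^\epsilon/(k-1+e^\epsilon)$. For the uniform prior $\pi$ on $\mathcal{K}^n$ and the single-target gain function $g_{\rm T}$, $$V_{\rm T}[\pi\triangleright\mathbf{N}\mathbf{S}]=\frac{1}{k^n}\sum_{\substack{n_0,\dots,n_{k-1}\ge0\\ n_0+\dots+n_{k-1}=n}}\binom{n}{n_0,\dots,n_{k-1}}\frac{p\,n^*+\frac{1-p}{k-1}(n-n^* )}{n},$$ where $n^*=\max(n_0,\dots,n_{k-1})$.
   Context: A dataset is $x=(x_0,\dots,x_{n-1})\in\mathcal{K}^n$; its histogram $h(x)$ is the map $\kappa\mapsto|\{i:x_i=\kappa\}|$; $\#z$ is the number of datasets with histogram $z$. Full $k$-RR channel $\mathbf{N}:\mathcal{K}^n\to\mathcal{K}^n$: $\mathbf{N}_{x,y}=\prod_{i=0}^{n-1}q(y_i\mid x_i)$, $q(b\mid a)=p$ if $b=a$, $(1-p)/(k-1)$ otherwise. Shuffle channel $\mathbf{S}:\mathcal{K}^n\to\mathcal{K}^n$: $\mathbf{S}_{x,y}=1/\#h(x)$ if $h(y)=h(x)$, else $0$; $\mathbf{N}\mathbf{S}$ is the matrix product. Uniform prior $\pi_x=1/k^n$. Single-target gain function: $\mathcal{W}=\mathcal{K}$, $g_{\rm T}(w,x)=1$ if $x_0=w$, else $0$. Posterior vulnerability: $V_{\rm T}[\pi\triangleright\mathbf{C}]=\sum_{y}\max_{w}\sum_{x}\pi_x\mathbf{C}_{x,y}g_{\rm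 T}(w,x)$. The multinomial coefficient is $\binom{n}{n_0,\dots,n_{k-1}}=n!/(n_0!\cdots n_{k-1}!)$. *)

theory Defs
  imports Complex_Main "HOL-Library.FuncSet"
begin

definition datasets :: "'a set \<Rightarrow> nat \<Rightarrow> 'a list set" where
  "datasets K n = {x. length x = n \<and> set x \<subseteq> K}"

definition hist :: "'a list \<Rightarrow> 'a \<Rightarrow> nat" where
  "hist x = (\<lambda>\<kappa>. card {i. i < length x \<and> x ! i = \<kappa>})"

definition num_hist :: "'a set \<Rightarrow> nat \<Rightarrow> ('a \<Rightarrow> nat) \<Rightarrow> nat" where
  "num_hist K n z = card {y \<in> datasets K n. hist y = z}"

text \<open>k-RR single-symbol channel q(b | a).\<close>
definition krr :: "nat \<Rightarrow> real \<Rightarrow> 'a \<Rightarrow> 'a \<Rightarrow> real" where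
  "krr k p b a = (if b = a then p else (1 - p) / (real k - 1))"

definition chanN :: "nat \<Rightarrow> real \<Rightarrow> nat \<Rightarrow> 'a list \<Rightarrow> 'a list \<Rightarrow> real" where
  "chanN k p n x y = (\<Prod>i<n. krr k p (y ! i) (x ! i))"

definition chanS :: "'a set \<Rightarrow> nat \<Rightarrow> 'a list \<Rightarrow> 'a list \<Rightarrow> real" where
  "chanS K n x y = (if hist y = hist x then 1 / real (num_hist K n (hist x)) else 0)"

definition chanNS :: "'a set \<Rightarrow> nat \<Rightarrow> real \<Rightarrow> nat \<Rightarrow> 'a list \<Rightarrow> 'a list \<Rightarrow> real" where
  "chanNS K k p n x y = (\<Sum>z\<in>datasets K n. chanN k p n x z * chanS K n z y)"

definition gainT :: "'a \<Rightarrow> 'a list \<Rightarrow> real" where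
  "gainT w x = (if x ! 0 = w then 1 else 0)"

definition postV_T :: "'a set \<Rightarrow> nat \<Rightarrow> ('a list \<Rightarrow> real) \<Rightarrow> ('a list \<Rightarrow> 'a list \<Rightarrow> real) \<Rightarrow> real" where
  "postV_T K n \<pi> C = (\<Sum>y\<in>datasets K n. Max ((\<lambda>w. \<Sum>x\<in>datasets K n. \<pi> x * C x y * gainT w x) ` K))"

definition unif_prior :: "nat \<Rightarrow> nat \<Rightarrow> 'a list \<Rightarrow> real" where
  "unif_prior k n x = 1 / real k ^ n"

definition compositions :: "nat \<Rightarrow> nat \<Rightarrow> (nat \<Rightarrow> nat) set" where
  "compositions k n = {c \<in> {..<k} \<rightarrow>\<^sub>E {..n}. (\<Sum>i<k. c i) = n}"

definition multinomial :: "nat \<Rightarrow> nat \<Rightarrow> (nat \<Rightarrow> nat) \<Rightarrow> real" where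
  "multinomial k n c = fact n / (\<Prod>i<k. fact (c i))"

end

theory Submission
  imports Defs "HOL-Combinatorics.Multiset_Permutations"
begin

(* Summing the gain over the secret first, only the first coordinate of N survives: the weight of
   the guess w at the output y is the mean of q(z_0 | w) over the rearrangements z of y, and by the
   symmetry of positions this mean only depends on the number of occurrences of w in y.  For
   \<epsilon> \<ge> 0 the diagonal probability p dominates (1 - p)/(k - 1), so the best guess is a most frequent
   symbol of y.  Finally the outputs are grouped by histogram: the histogram (n_0, ..., n_{k-1})
   is realised by exactly the multinomial number of datasets. *)

lemma hist_eq_count_mset: "hist x = count (mset x)"
  by (auto simp: hist_def count_mset count_list_eq_length_filter length_filter_conv_card
      intro!: arg_cong[where f = card])

lemma finite_datasets: "finite K \<Longrightarrow> finite (datasets K n)"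
  unfolding datasets_def using finite_lists_length_eq[of K n] by (simp add: conj_commute)

lemma datasets_Suc: "datasets K (Suc n) = (\<lambda>(a, x). a # x) ` (K \<times> datasets K n)"
  by (auto simp: datasets_def length_Suc_conv image_iff)

lemma sum_datasets_Suc:
  "(\<Sum>x\<in>datasets K (Suc n). F x) = (\<Sum>a\<in>K. \<Sum>x\<in>datasets K n. F (a # x))"
  by (simp add: datasets_Suc sum.reindex inj_on_def sum.cartesian_product case_prod_unfold)

lemma mset_datasets: "mset ` datasets K n = {M. set_mset M \<subseteq> K \<and> size M = n}"
proof (intro equalityI subsetI)
  fix M assume "M \<in> {M. set_mset M \<subseteq> K \<and> size M = n}"
  moreover obtain y where "mset y = M" using ex_mset by blast
  ultimately show "M \<in> mset ` datasets K n"
    by (auto simp: datasets_def)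
qed (auto simp: datasets_def)

lemma hist_class_eq_permutations_of_multiset:
  "y \<in> datasets K n \<Longrightarrow> {z \<in> datasets K n. hist z = hist y} = permutations_of_multiset (mset y)"
  by (auto simp: hist_eq_count_mset count_inject permutations_of_multiset_def datasets_def
      dest: mset_eq_setD mset_eq_length)

lemma sum_datasets_by_mset:
  assumes "finite K"
  shows "(\<Sum>y\<in>datasets K n. F (mset y))
       = (\<Sum>M | set_mset M \<subseteq> K \<and> size M = n. real (card (permutations_of_multiset M)) * F M)"
proof -
  have "(\<Sum>y\<in>datasets K n. F (mset y))
      = (\<Sum>M\<in>mset ` datasets K n. \<Sum>y\<in>{y \<in> datasets K n. mset y = M}. F (mset y))"
    by (rule sum.group[symmetric]) (auto simp: finite_datasets assms)
  also have "\<dots> = (\<Sum>M\<in>mset ` datasets K n. real (card (permutations_of_multiset M)) * F M)"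
  proof (rule sum.cong[OF refl])
    fix M assume "M \<in> mset ` datasets K n"
    then have "{y \<in> datasets K n. mset y = M} = permutations_of_multiset M"
      by (auto simp: datasets_def permutations_of_multiset_def dest: mset_eq_setD mset_eq_length)
    then show "(\<Sum>y\<in>{y \<in> datasets K n. mset y = M}. F (mset y))
             = real (card (permutations_of_multiset M)) * F M"
      by (simp add: permutations_of_multiset_def)
  qed
  finally show ?thesis by (simp only: mset_datasets)
qed

lemma card_permutations_of_multiset_hd:
  assumes "M \<noteq> {#}"
  shows "size M * card {z \<in> permutations_of_multiset M. hd z = w}
       = card (permutations_of_multiset M) * count M w"
proof (cases "w \<in># M")
  case True
  have "{z \<in> permutations_of_multiset M. hd z = w} = (#) w ` permutations_of_multiset (M - {#w#})"
    using True by (auto simp: permutations_of_multiset_nonempty[OF assms])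
  then have "card {z \<in> permutations_of_multiset M. hd z = w}
           = card (permutations_of_multiset (M - {#w#}))"
    by (simp add: card_image)
  then show ?thesis
    using card_permutations_of_multiset_remove_aux[OF True] by simp
next
  case False
  have "hd z \<in># M" if "z \<in> permutations_of_multiset M" for z
    using that assms by (cases z) (auto simp: permutations_of_multiset_def)
  then have "{z \<in> permutations_of_multiset M. hd z = w} = {}" using False by blast
  then show ?thesis using False by (simp add: not_in_iff)
qed

lemma sum_krr_eq_1:
  assumes "finite K" "card K = k" "k \<ge> 2" "b \<in> K"
  shows "(\<Sum>a\<in>K. krr k p b a) = 1"
proof -
  have "(\<Sum>a\<in>K - {b}. krr k p b a) = (\<Sum>a\<in>K - {b}. (1 - p) / (real k - 1))"
    by (intro sum.cong) (auto simp: krr_def)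
  then have "(\<Sum>a\<in>K. krr k p b a) = p + (\<Sum>a\<in>K - {b}. (1 - p) / (real k - 1))"
    using assms by (simp add: sum.remove krr_def)
  also have "\<dots> = 1"
    using assms by (simp add: of_nat_diff)
  finally show ?thesis .
qed

lemma chanN_Cons: "chanN k p (Suc n) (a # x) (b # z) = krr k p b a * chanN k p n x z"
  by (simp add: chanN_def prod.lessThan_Suc_shift del: prod.lessThan_Suc)

lemma sum_chanN_eq_1:
  assumes "finite K" "card K = k" "k \<ge> 2"
  shows "z \<in> datasets K n \<Longrightarrow> (\<Sum>x\<in>datasets K n. chanN k p n x z) = 1"
proof (induction n arbitrary: z)
  case 0
  have "datasets K 0 = {[]}" by (auto simp: datasets_def)
  then show ?case by (simp add: chanN_def)
next
  case (Suc n)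
  then obtain b z' where z: "z = b # z'" "b \<in> K" "z' \<in> datasets K n"
    by (auto simp: datasets_def length_Suc_conv)
  have "(\<Sum>x\<in>datasets K (Suc n). chanN k p (Suc n) x z)
      = (\<Sum>a\<in>K. krr k p b a * (\<Sum>x\<in>datasets K n. chanN k p n x z'))"
    by (simp add: sum_datasets_Suc z chanN_Cons sum_distrib_left)
  also have "\<dots> = 1"
    using Suc.IH[OF z(3)] sum_krr_eq_1[OF assms z(2)] by simp
  finally show ?case .
qed

lemma sum_gainT_chanN:
  assumes "finite K" "card K = k" "k \<ge> 2" "z \<in> datasets K n" "0 < n" "w \<in> K"
  shows "(\<Sum>x\<in>datasets K n. gainT w x * chanN k p n x z) = krr k p (hd z) w"
proof -
  obtain m where n: "n = Suc m" using assms(5) by (cases n) auto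
  then obtain b z' where z: "z = b # z'" "z' \<in> datasets K m"
    using assms(4) by (auto simp: datasets_def length_Suc_conv)
  have "(\<Sum>x\<in>datasets K n. gainT w x * chanN k p n x z)
      = (\<Sum>a\<in>K. (if a = w then krr k p b a else 0) * (\<Sum>x\<in>datasets K m. chanN k p m x z'))"
    by (auto simp: n z sum_datasets_Suc chanN_Cons gainT_def sum_distrib_left intro!: sum.cong)
  also have "\<dots> = krr k p b w"
    using sum_chanN_eq_1[OF assms(1-3) z(2)] assms(1,6) by simp
  finally show ?thesis by (simp add: z)
qed

text \<open>The mean of q(z_i | w) over the positions i of a dataset z of length n in which w occurs
  exactly m times.\<close>
definition avg_krr :: "nat \<Rightarrow> real \<Rightarrow> nat \<Rightarrow> nat \<Rightarrow> real" where
  "avg_krr k p n m = (p * real m + (1 - p) / (real k - 1) * (real n - real m)) / real n"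

lemma avg_krr_eq:
  assumes "c = (1 - p) / (real k - 1)"
  shows "avg_krr k p n m = (c * real n + (p - c) * real m) / real n"
proof -
  have "p * real m + c * (real n - real m) = c * real n + (p - c) * real m"
    by (simp add: algebra_simps)
  then show ?thesis by (simp only: avg_krr_def assms)
qed

lemma mono_avg_krr:
  assumes "(1 - p) / (real k - 1) \<le> p"
  shows "mono (avg_krr k p n)"
proof
  fix a b :: nat assume "a \<le> b"
  then show "avg_krr k p n a \<le> avg_krr k p n b"
    using assms by (simp add: avg_krr_eq[OF refl] divide_right_mono mult_left_mono)
qed

lemma krr_off_diag_le_diag:
  assumes "k \<ge> 2" "\<epsilon> \<ge> 0" "p = exp \<epsilon> / (real k - 1 + exp \<epsilon>)"
  shows "(1 - p) / (real k - 1) \<le> p"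
proof -
  have "real k \<ge> 2" using assms(1) by simp
  then have den: "real k - 1 + exp \<epsilon> > 0" using exp_gt_zero[of \<epsilon>] by linarith
  have "(1 - p) / (real k - 1) = 1 / (real k - 1 + exp \<epsilon>)"
    using den assms by (simp add: field_simps)
  also have "\<dots> \<le> p"
    using den assms(2,3) by (simp add: divide_right_mono)
  finally show ?thesis .
qed

lemma sum_krr_hd_permutations_of_multiset:
  assumes "M \<noteq> {#}"
  shows "(\<Sum>z\<in>permutations_of_multiset M. krr k p (hd z) w)
       = real (card (permutations_of_multiset M)) * avg_krr k p (size M) (count M w)"
proof -
  define c where "c = (1 - p) / (real k - 1)"
  define N where "N = card (permutations_of_multiset M)"
  define A where "A = card {z \<in> permutations_of_multiset M. hd z = w}"
  have "real (size M) * real A = real N * real (count M w)"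
    using card_permutations_of_multiset_hd[OF assms, of w]
    unfolding A_def N_def of_nat_mult[symmetric] by presburger
  then have A: "real A = real N * real (count M w) / real (size M)"
    using assms by (simp add: eq_divide_eq mult.commute)
  have "(\<Sum>z\<in>permutations_of_multiset M. krr k p (hd z) w)
      = (\<Sum>z\<in>permutations_of_multiset M. c + (p - c) * (if hd z = w then 1 else 0))"
    by (intro sum.cong) (auto simp: krr_def c_def)
  also have "\<dots> = real N * c + (p - c) * real A"
    by (simp add: sum.distrib sum_distrib_left[symmetric] sum.If_cases N_def A_def Int_def)
  also have "\<dots> = real N * avg_krr k p (size M) (count M w)"
    using assms by (simp add: avg_krr_eq[OF c_def] A field_simps)
  finally show ?thesis by (simp add: N_def)
qed

lemma joint_posterior_eq:
  assumes K: "finite K" "card K = k" "k \<ge> 2" and "0 < n" "y \<in> datasets K n" "w \<in> K"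
  shows "(\<Sum>x\<in>datasets K n. unif_prior k n x * chanNS K k p n x y * gainT w x)
       = avg_krr k p n (hist y w) / real k ^ n"
proof -
  define D where "D = datasets K n"
  define P where "P = permutations_of_multiset (mset y)"
  have P: "P = {z \<in> D. hist z = hist y}"
    using assms(5) by (simp add: P_def D_def hist_class_eq_permutations_of_multiset)
  have "mset y \<noteq> {#}" "length y = n"
    using assms(4,5) by (auto simp: datasets_def)
  have "(\<Sum>x\<in>D. unif_prior k n x * chanNS K k p n x y * gainT w x)
      = (\<Sum>x\<in>D. \<Sum>z\<in>D. gainT w x * chanN k p n x z * chanS K n z y) / real k ^ n"
    by (simp add: unif_prior_def chanNS_def D_def sum_distrib_left sum_divide_distrib mult_ac)
  also have "\<dots> = (\<Sum>z\<in>D. chanS K n z y * (\<Sum>x\<in>D. gainT w x * chanN k p n x z)) / real k ^ n"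
    by (subst sum.swap) (simp add: sum_distrib_left mult_ac)
  also have "\<dots> = (\<Sum>z\<in>D. chanS K n z y * krr k p (hd z) w) / real k ^ n"
    using sum_gainT_chanN[OF K _ assms(4,6)] by (simp add: D_def)
  also have "\<dots> = (\<Sum>z\<in>D. if hist z = hist y then krr k p (hd z) w / real (card P) else 0)
      / real k ^ n"
    by (intro arg_cong[where f = "\<lambda>s. s / _"] sum.cong refl)
      (auto simp: chanS_def num_hist_def P D_def)
  also have "\<dots> = (\<Sum>z\<in>P. krr k p (hd z) w / real (card P)) / real k ^ n"
    unfolding P D_def by (simp add: sum.inter_filter finite_datasets K(1))
  also have "\<dots> = avg_krr k p n (hist y w) / real k ^ n"
    using sum_krr_hd_permutations_of_multiset[OF \<open>mset y \<noteq> {#}\<close>, of k p w]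
    by (simp add: P_def sum_divide_distrib[symmetric] hist_eq_count_mset \<open>length y = n\<close>)
  finally show ?thesis by (simp add: D_def)
qed

lemma Max_joint_posterior_eq:
  assumes K: "finite K" "card K = k" "k \<ge> 2" and "0 < n" "y \<in> datasets K n"
    and "(1 - p) / (real k - 1) \<le> p"
  shows "Max ((\<lambda>w. \<Sum>x\<in>datasets K n. unif_prior k n x * chanNS K k p n x y * gainT w x) ` K)
       = avg_krr k p n (Max (hist y ` K)) / real k ^ n"
proof -
  define f where "f m = avg_krr k p n m / real k ^ n" for m
  have "mono f"
    using mono_avg_krr[OF assms(6)] by (simp add: f_def mono_def divide_right_mono)
  have "(\<lambda>w. \<Sum>x\<in>datasets K n. unif_prior k n x * chanNS K k p n x y * gainT w x) ` K
      = f ` hist y ` K"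
    using joint_posterior_eq[OF K assms(4,5)] by (simp add: f_def image_image cong: image_cong)
  moreover have "K \<noteq> {}" using K by auto
  ultimately show ?thesis
    using mono_Max_commute[OF \<open>mono f\<close>, of "hist y ` K"] K(1) by (simp add: f_def)
qed

definition mset_of_composition :: "(nat \<Rightarrow> 'a) \<Rightarrow> nat \<Rightarrow> (nat \<Rightarrow> nat) \<Rightarrow> 'a multiset" where
  "mset_of_composition \<phi> k c = (\<Sum>i<k. replicate_mset (c i) (\<phi> i))"

lemma count_mset_of_composition:
  assumes "inj_on \<phi> {..<k}" "j < k"
  shows "count (mset_of_composition \<phi> k c) (\<phi> j) = c j"
proof -
  have "count (mset_of_composition \<phi> k c) (\<phi> j) = (\<Sum>i<k. if i = j then c i else 0)"
    using assms unfolding mset_of_composition_def count_sum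
    by (intro sum.cong) (auto dest: inj_onD)
  then show ?thesis using assms(2) by simp
qed

lemma set_mset_of_composition: "set_mset (mset_of_composition \<phi> k c) \<subseteq> \<phi> ` {..<k}"
  by (auto simp: mset_of_composition_def set_mset_sum split: if_splits)

lemma size_mset_of_composition: "size (mset_of_composition \<phi> k c) = (\<Sum>i<k. c i)"
  by (simp add: mset_of_composition_def size_multiset_sum)

lemma sum_count_eq_size:
  assumes "finite K" "set_mset M \<subseteq> K"
  shows "(\<Sum>x\<in>K. count M x) = size M"
proof -
  have "(\<Sum>x\<in>K. count M x) = (\<Sum>x\<in>set_mset M. count M x)"
    using assms by (intro sum.mono_neutral_right) (auto simp: not_in_iff)
  then show ?thesis by (simp add: size_multiset_overloaded_eq)
qed

lemma bij_betw_mset_of_composition: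
  assumes \<phi>: "bij_betw \<phi> {..<k} K"
  shows "bij_betw (mset_of_composition \<phi> k) (compositions k n) {M. set_mset M \<subseteq> K \<and> size M = n}"
proof (rule bij_betw_byWitness[where f' = "\<lambda>M. \<lambda>i\<in>{..<k}. count M (\<phi> i)"])
  have inj: "inj_on \<phi> {..<k}" and K: "K = \<phi> ` {..<k}"
    using \<phi> by (auto simp: bij_betw_def)
  show "\<forall>c\<in>compositions k n. (\<lambda>i\<in>{..<k}. count (mset_of_composition \<phi> k c) (\<phi> i)) = c"
    by (auto simp: compositions_def count_mset_of_composition[OF inj] PiE_def extensional_def)
  show "\<forall>M\<in>{M. set_mset M \<subseteq> K \<and> size M = n}.
          mset_of_composition \<phi> k (\<lambda>i\<in>{..<k}. count M (\<phi> i)) = M"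
  proof (intro ballI multiset_eqI)
    fix M x assume M: "M \<in> {M. set_mset M \<subseteq> K \<and> size M = n}"
    show "count (mset_of_composition \<phi> k (\<lambda>i\<in>{..<k}. count M (\<phi> i))) x = count M x"
    proof (cases "x \<in> K")
      case True
      then obtain j where "j < k" "x = \<phi> j" using K by auto
      then show ?thesis by (simp add: count_mset_of_composition[OF inj])
    next
      case False
      then have "x \<notin># M" "x \<notin># mset_of_composition \<phi> k (\<lambda>i\<in>{..<k}. count M (\<phi> i))"
        using M set_mset_of_composition[of \<phi> k] K by blast+
      then show ?thesis by (simp add: not_in_iff)
    qed
  qed
  show "mset_of_composition \<phi> k ` compositions k n \<subseteq> {M. set_mset M \<subseteq> K \<and> size M = n}"
    using set_mset_of_composition[of \<phi> k] K
    by (auto simp: size_mset_of_composition compositions_def)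
  show "(\<lambda>M. \<lambda>i\<in>{..<k}. count M (\<phi> i)) ` {M. set_mset M \<subseteq> K \<and> size M = n} \<subseteq> compositions k n"
  proof (rule image_subsetI)
    fix M assume "M \<in> {M. set_mset M \<subseteq> K \<and> size M = n}"
    then have M: "set_mset M \<subseteq> K" "n = size M" by simp_all
    have sum: "(\<Sum>i<k. count M (\<phi> i)) = size M"
      using sum_count_eq_size[of K M] sum.reindex[OF inj, of "count M"] M(1) K by simp
    moreover have "count M (\<phi> i) \<le> size M" if "i < k" for i
      using that sum member_le_sum[of i "{..<k}" "\<lambda>i. count M (\<phi> i)"] by simp
    ultimately show "(\<lambda>i\<in>{..<k}. count M (\<phi> i)) \<in> compositions k n"
      using M(2) by (simp add: compositions_def)
  qed
qed

lemma card_permutations_of_mset_of_composition: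
  assumes "inj_on \<phi> {..<k}" "c \<in> compositions k n"
  shows "real (card (permutations_of_multiset (mset_of_composition \<phi> k c))) = multinomial k n c"
proof -
  define M where "M = mset_of_composition \<phi> k c"
  have "(\<Prod>x\<in>set_mset M. fact (count M x)) = (\<Prod>x\<in>\<phi> ` {..<k}. fact (count M x) :: nat)"
    using set_mset_of_composition[of \<phi> k c]
    by (intro prod.mono_neutral_left) (auto simp: M_def not_in_iff)
  also have "\<dots> = (\<Prod>i<k. fact (c i))"
    using assms(1) by (simp add: prod.reindex M_def count_mset_of_composition)
  finally have "card (permutations_of_multiset M) * (\<Prod>i<k. fact (c i)) = fact n"
    using card_permutations_of_multiset_aux[of M] assms(2)
    by (simp add: M_def size_mset_of_composition compositions_def)
  then have "real (card (permutations_of_multiset M) * (\<Prod>i<k. fact (c i))) = real (fact n)"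
    by (rule arg_cong)
  then have "real (card (permutations_of_multiset M)) * (\<Prod>i<k. fact (c i)) = fact n"
    by (simp only: of_nat_mult of_nat_prod of_nat_fact)
  moreover have "(\<Prod>i<k. fact (c i) :: real) \<noteq> 0" by simp
  ultimately show ?thesis
    by (simp add: M_def multinomial_def eq_divide_eq)
qed

lemma sum_datasets_by_composition:
  fixes F :: "nat \<Rightarrow> real"
  assumes "finite K" "card K = k"
  shows "(\<Sum>y\<in>datasets K n. F (Max (hist y ` K)))
       = (\<Sum>c\<in>compositions k n. multinomial k n c * F (Max (c ` {..<k})))"
proof -
  obtain \<phi> where \<phi>: "bij_betw \<phi> {..<k} K"
    using ex_bij_betw_nat_finite[OF assms(1)] assms(2) by (auto simp: atLeast0LessThan)
  then have inj: "inj_on \<phi> {..<k}" and K: "K = \<phi> ` {..<k}"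
    by (auto simp: bij_betw_def)
  define G where "G M = F (Max (count M ` K))" for M
  have "(\<Sum>y\<in>datasets K n. F (Max (hist y ` K))) = (\<Sum>y\<in>datasets K n. G (mset y))"
    by (simp add: G_def hist_eq_count_mset)
  also have "\<dots> = (\<Sum>M | set_mset M \<subseteq> K \<and> size M = n. real (card (permutations_of_multiset M)) * G M)"
    by (rule sum_datasets_by_mset[OF assms(1)])
  also have "\<dots> = (\<Sum>c\<in>compositions k n.
      real (card (permutations_of_multiset (mset_of_composition \<phi> k c)))
        * G (mset_of_composition \<phi> k c))"
    by (rule sum.reindex_bij_betw[OF bij_betw_mset_of_composition[OF \<phi>], symmetric])
  also have "\<dots> = (\<Sum>c\<in>compositions k n. multinomial k n c * F (Max (c ` {..<k})))"
  proof (intro sum.cong refl)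
    fix c assume "c \<in> compositions k n"
    have "count (mset_of_composition \<phi> k c) ` K = c ` {..<k}"
      unfolding K image_image using inj by (intro image_cong) (auto simp: count_mset_of_composition)
    then show "real (card (permutations_of_multiset (mset_of_composition \<phi> k c)))
        * G (mset_of_composition \<phi> k c) = multinomial k n c * F (Max (c ` {..<k}))"
      using card_permutations_of_mset_of_composition[OF inj \<open>c \<in> compositions k n\<close>]
      by (simp add: G_def)
  qed
  finally show ?thesis .
qed

theorem mainTheorem14:
  fixes K :: "'a set" and n k :: nat and \<epsilon> p :: real
  assumes "n \<ge> 1" and "k \<ge> 2" and "finite K" and "card K = k" and "\<epsilon> \<ge> 0"
    and "p = exp \<epsilon> / (real k - 1 + exp \<epsilon>)"
  shows "postV_T K n (unif_prior k n) (chanNS K k p n)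
       = 1 / real k ^ n *
         (\<Sum>c\<in>compositions k n.
            multinomial k n c *
            ((p * real (Max (c ` {..<k})) + (1 - p) / (real k - 1) * (real n - real (Max (c ` {..<k}))))
             / real n))"
proof -
  have "(1 - p) / (real k - 1) \<le> p"
    using krr_off_diag_le_diag[OF assms(2,5,6)] .
  then have "postV_T K n (unif_prior k n) (chanNS K k p n)
      = (\<Sum>y\<in>datasets K n. avg_krr k p n (Max (hist y ` K)) / real k ^ n)"
    unfolding postV_T_def using assms(1-4)
    by (intro sum.cong refl) (simp add: Max_joint_posterior_eq)
  also have "\<dots> = (\<Sum>c\<in>compositions k n.
      multinomial k n c * (avg_krr k p n (Max (c ` {..<k})) / real k ^ n))"
    by (rule sum_datasets_by_composition[OF assms(3,4)])
  finally show ?thesis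
    by (simp add: avg_krr_def sum_distrib_left mult_ac)
qed

end
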